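(* Let $\varepsilon$ be as in the context and let $(a,b,c)$ be a solution of $$2a'/a=-a^2+c^2,\qquad 2b'/b=a^2+c^2,\qquad 2c'/c=a^2-c^2+2(ab)^2+2\varepsilon(b)a^2$$ with $a,b,c>0$, on its maximal interval $(\xi,\eta)$, and fix $t_0\in(\xi,\eta)$. Then exactly one of the following holds: (1) $\xi$ is finite and $\int_\xi^{t_0}abc\,dt<\infty$ (so the associated metric $g=(abc)^2dt^2+a^2\sigma_1^2+b^2\sigma_2^2+c^2\sigma_3^2$ is not complete at that end); or (2) $\xi=-\infty$, $0\le c^2-a^2\le 2a^2(b^2+\varepsilon(b))$ on all of $(\xi,\eta)$, and $(a,b,c)\to(q,0,q)$ as $t\to-\infty$ for some $q>0$. In particular, the solutions with maximal interval of the form $(-\infty,\eta)$ are exactly the unstable curves of the equilibrium points $(q,0,q)$, $q>0$.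
   Context: $\varepsilon:[0,\infty)\to\mathbb R$ is a $C^\infty$ function with (i) $\varepsilon(0)=0$ and $\varepsilon\ge0$; (ii) $\varepsilon'(0)=0$ and $\varepsilon'(b)>-2b$ for all $b$; (iii) $\varepsilon$ extends smoothly to an even function on $\mathbb R$. The prime denotes $d/dt$. $\sigma_1,\sigma_2,\sigma_3$ are the left-invariant 1-forms dual to a basis $X_1,X_2,X_3$ of the Lie algebra of $E(2)$ with $[X_1,X_2]=-X_3$, $[X_2,X_3]=-X_1$, $[X_3,X_1]=0$. *)

theory Defs
  imports "HOL-Analysis.Analysis"
begin

definition smooth_real :: "(real \<Rightarrow> real) \<Rightarrow> bool" where
  "smooth_real f \<longleftrightarrow> (\<exists>D :: nat \<Rightarrow> real \<Rightarrow> real. D 0 = f \<and>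
      (\<forall>n x. (D n has_real_derivative D (Suc n) x) (at x)))"

text \<open>Standing hypotheses on epsilon. The function is taken to be its smooth even
  extension to the real line (condition (iii)); only its values on [0,inf) matter.\<close>
definition admissible_eps :: "(real \<Rightarrow> real) \<Rightarrow> bool" where
  "admissible_eps \<epsilon> \<longleftrightarrow> smooth_real \<epsilon> \<and> (\<forall>x. \<epsilon> (- x) = \<epsilon> x) \<and>
      \<epsilon> 0 = 0 \<and> (\<forall>x\<ge>0. \<epsilon> x \<ge> 0) \<and>
      deriv \<epsilon> 0 = 0 \<and> (\<forall>b>0. deriv \<epsilon> b > - 2 * b)"

definition is_sol :: "(real \<Rightarrow> real) \<Rightarrow> (real \<Rightarrow> real) \<Rightarrow> (real \<Rightarrow> real) \<Rightarrow> (real \<Rightarrow> real)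
    \<Rightarrow> real set \<Rightarrow> bool" where
  "is_sol \<epsilon> a b c I \<longleftrightarrow> (\<forall>t\<in>I. a t > 0 \<and> b t > 0 \<and> c t > 0 \<and>
      (a has_real_derivative a t * (- (a t)\<^sup>2 + (c t)\<^sup>2) / 2) (at t) \<and>
      (b has_real_derivative b t * ((a t)\<^sup>2 + (c t)\<^sup>2) / 2) (at t) \<and>
      (c has_real_derivative c t * ((a t)\<^sup>2 - (c t)\<^sup>2 + 2 * (a t * b t)\<^sup>2
          + 2 * \<epsilon> (b t) * (a t)\<^sup>2) / 2) (at t))"

definition eint :: "ereal \<Rightarrow> ereal \<Rightarrow> real set" where
  "eint \<xi> \<eta> = {t. \<xi> < ereal t \<and> ereal t < \<eta>}"

definition maximal_sol :: "(real \<Rightarrow> real) \<Rightarrow> (real \<Rightarrow> real) \<Rightarrow> (real \<Rightarrow> real) \<Rightarrow> (real \<Rightarrow> real)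
    \<Rightarrow> ereal \<Rightarrow> ereal \<Rightarrow> bool" where
  "maximal_sol \<epsilon> a b c \<xi> \<eta> \<longleftrightarrow> \<xi> < \<eta> \<and> is_sol \<epsilon> a b c (eint \<xi> \<eta>) \<and>
     \<not> (\<exists>J a2 b2 c2. open J \<and> is_interval J \<and> eint \<xi> \<eta> \<subset> J \<and> is_sol \<epsilon> a2 b2 c2 J \<and>
          (\<forall>t\<in>eint \<xi> \<eta>. a2 t = a t \<and> b2 t = b t \<and> c2 t = c t))"

end

theory Submission
  imports Defs
begin

text \<open>If \<open>\<xi>\<close> is finite, \<open>b\<close> is positive and increasing, so \<open>abc \<le> b(a\<^sup>2 + c\<^sup>2)/2 = b'\<close>
  has finite integral near \<open>\<xi>\<close>.

  If \<open>\<xi> = -\<infinity>\<close>, the key facts are \<open>a\<^sup>2 \<le> c\<^sup>2 \<le> a\<^sup>2 (1 + 2 (b\<^sup>2 + \<epsilon>(b)))\<close>. A violation of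
  either inequality persists backwards in time, and then \<open>x = a\<^sup>2\<close> (resp. \<open>x = c\<^sup>2\<close>) solves
  \<open>x' = x (p - x)\<close> with \<open>p/x\<close> bounded by a constant below 1 on a whole half-line, which forces
  \<open>1/x\<close> to vanish in finite backward time. Given both inequalities, \<open>a\<close> and \<open>b\<close> increase and
  \<open>a\<^sup>2 exp(-(M + 1) b\<^sup>2)\<close> decreases, where \<open>\<epsilon>(x) \<le> M x\<^sup>2\<close> because \<open>\<epsilon>(0) = \<epsilon>'(0) = 0\<close>. Hence
  \<open>a\<^sup>2 \<ge> \<beta> > 0\<close> in the past, \<open>b\<^sup>2 exp(-\<beta> t)\<close> increases and \<open>b \<rightarrow> 0\<close> exponentially, \<open>a\<close> decreases
  to a limit \<open>q > 0\<close>, and \<open>c\<close> is squeezed between \<open>a\<close> and \<open>a sqrt(1 + 2 (b\<^sup>2 + \<epsilon>(b)))\<close>.\<close>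

lemma DERIV_nonneg_imp_le:
  fixes f f' :: "real \<Rightarrow> real"
  assumes "t \<le> s"
    and "\<And>x. t \<le> x \<Longrightarrow> x \<le> s \<Longrightarrow> (f has_real_derivative f' x) (at x)"
    and "\<And>x. t \<le> x \<Longrightarrow> x \<le> s \<Longrightarrow> 0 \<le> f' x"
  shows "f t \<le> f s"
  using assms(1) by (rule DERIV_nonneg_imp_nondecreasing) (use assms in blast)

lemma DERIV_nonpos_imp_ge:
  fixes f f' :: "real \<Rightarrow> real"
  assumes "t \<le> s"
    and "\<And>x. t \<le> x \<Longrightarrow> x \<le> s \<Longrightarrow> (f has_real_derivative f' x) (at x)"
    and "\<And>x. t \<le> x \<Longrightarrow> x \<le> s \<Longrightarrow> f' x \<le> 0"
  shows "f s \<le> f t"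
  using assms(1) by (rule DERIV_nonpos_imp_nonincreasing) (use assms in blast)

lemma negative_persists_backward:
  fixes w w' :: "real \<Rightarrow> real"
  assumes "t \<le> t1"
    and deriv: "\<And>x. t \<le> x \<Longrightarrow> x \<le> t1 \<Longrightarrow> (w has_real_derivative w' x) (at x)"
    and increasing_where_neg: "\<And>x. t \<le> x \<Longrightarrow> x \<le> t1 \<Longrightarrow> w x < 0 \<Longrightarrow> 0 < w' x"
    and "w t1 < 0"
  shows "w t < 0"
proof -
  have "continuous_on {t..t1} w"
    by (rule continuous_at_imp_continuous_on) (meson DERIV_isCont deriv atLeastAtMost_iff)
  then obtain p where p: "p \<in> {t..t1}" "\<And>x. x \<in> {t..t1} \<Longrightarrow> w p \<le> w x"
    using continuous_attains_inf[OF compact_Icc] \<open>t \<le> t1\<close> by (metis atLeastatMost_empty_iff)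
  have wp: "w p < 0"
    using p(2)[of t1] \<open>t \<le> t1\<close> \<open>w t1 < 0\<close> by simp
  have "p = t"
  proof (rule ccontr)
    assume "p \<noteq> t"
    with p(1) have "t < p" by simp
    obtain d where "0 < d" and d: "\<And>h. 0 < h \<Longrightarrow> h < d \<Longrightarrow> w (p - h) < w p"
      using DERIV_pos_inc_left[OF deriv increasing_where_neg] p(1) wp by auto
    define h where "h = min (d / 2) (p - t)"
    have "0 < h" "h < d" "p - h \<in> {t..t1}"
      using \<open>0 < d\<close> \<open>t < p\<close> p(1) by (auto simp: h_def)
    then show False
      using d p(2) by fastforce
  qed
  with wp show ?thesis by simp
qed

lemma deriv_ge_pos_imp_neg_on_halfline:
  fixes y y' :: "real \<Rightarrow> real"
  assumes deriv: "\<And>x. x \<le> t1 \<Longrightarrow> (y has_real_derivative y' x) (at x)"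
    and bound: "\<And>x. x \<le> t1 \<Longrightarrow> \<kappa> \<le> y' x" and "0 < \<kappa>"
  shows "\<exists>t\<le>t1. y t < 0"
proof -
  define t where "t = t1 - \<bar>y t1\<bar> / \<kappa> - 1"
  have "0 \<le> \<bar>y t1\<bar> / \<kappa>"
    using \<open>0 < \<kappa>\<close> by simp
  then have "t \<le> t1"
    by (simp add: t_def)
  have "y t - \<kappa> * t \<le> y t1 - \<kappa> * t1"
    by (rule DERIV_nonneg_imp_le[OF \<open>t \<le> t1\<close>])
      (use deriv bound in \<open>auto intro!: derivative_eq_intros\<close>)
  moreover have "\<kappa> * (t1 - t) = \<bar>y t1\<bar> + \<kappa>"
    using \<open>0 < \<kappa>\<close> by (simp add: t_def field_simps)
  ultimately have "y t \<le> y t1 - \<bar>y t1\<bar> - \<kappa>"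
    by (simp add: algebra_simps)
  then show ?thesis
    using \<open>t \<le> t1\<close> \<open>0 < \<kappa>\<close> by (intro exI[of _ t]) auto
qed

text \<open>Here \<open>(1/X)' = 1 - p/X \<ge> 1 - p t\<^sub>1 / X t\<^sub>1 > 0\<close>, so \<open>1/X\<close> would become
  negative in finite backward time.\<close>
lemma logistic_not_positive_on_halfline:
  fixes X p :: "real \<Rightarrow> real"
  assumes pos: "\<And>s. s \<le> t1 \<Longrightarrow> 0 < X s"
    and ode: "\<And>s. s \<le> t1 \<Longrightarrow> (X has_real_derivative X s * (p s - X s)) (at s)"
    and X_ge: "\<And>s. s \<le> t1 \<Longrightarrow> X t1 \<le> X s"
    and p_nonneg: "\<And>s. s \<le> t1 \<Longrightarrow> 0 \<le> p s"
    and p_le: "\<And>s. s \<le> t1 \<Longrightarrow> p s \<le> p t1"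
    and "p t1 < X t1"
  shows False
proof -
  have "\<exists>t\<le>t1. inverse (X t) < 0"
  proof (rule deriv_ge_pos_imp_neg_on_halfline)
    fix s assume s: "s \<le> t1"
    show "((\<lambda>t. inverse (X t)) has_real_derivative 1 - p s / X s) (at s)"
      by (rule DERIV_cong[OF DERIV_inverse_fun[OF ode[OF s]]])
        (use pos[OF s] in \<open>simp_all add: field_simps power2_eq_square\<close>)
    have "p s / X s \<le> p t1 / X t1"
      using pos[of t1] by (intro frac_le p_nonneg p_le X_ge s) auto
    then show "1 - p t1 / X t1 \<le> 1 - p s / X s"
      by simp
  next
    show "0 < 1 - p t1 / X t1"
      using pos[of t1] \<open>p t1 < X t1\<close> by (simp add: field_simps)
  qed
  then show False
    using pos by (meson inverse_negative_iff_negative not_less_iff_gr_or_eq)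
qed

lemma smooth_real_has_deriv:
  assumes "smooth_real f"
  shows "(f has_real_derivative deriv f x) (at x)"
proof -
  obtain D where "D 0 = f" and "\<And>n x. (D n has_real_derivative D (Suc n) x) (at x)"
    using assms unfolding smooth_real_def by blast
  then show ?thesis
    by (metis DERIV_imp_deriv)
qed

lemma smooth_flat_imp_quadratic_bound:
  assumes "smooth_real f" "f 0 = 0" "deriv f 0 = 0"
  obtains M where "0 \<le> M" "\<And>x. 0 \<le> x \<Longrightarrow> x \<le> B \<Longrightarrow> f x \<le> M * x\<^sup>2"
proof -
  obtain D where D0: "D 0 = f" and D: "\<And>n x. (D n has_real_derivative D (Suc n) x) (at x)"
    using assms unfolding smooth_real_def by blast
  have D1: "D 1 0 = 0"
    using DERIV_imp_deriv[OF D[of 0 0]] D0 assms(3) by simp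
  have "continuous_on {0..B} (D 2)"
    by (rule continuous_at_imp_continuous_on) (auto intro: DERIV_isCont D)
  then obtain K where K: "\<And>x. x \<in> {0..B} \<Longrightarrow> D 2 x \<le> K"
    using compact_Icc compact_imp_bounded compact_continuous_image bounded_iff
    by (metis abs_le_D1 image_eqI real_norm_def)
  have "f x \<le> max 0 (K / 2) * x\<^sup>2" if "0 \<le> x" "x \<le> B" for x
  proof (cases "x = 0")
    case True
    then show ?thesis using assms(2) by simp
  next
    case False
    with \<open>0 \<le> x\<close> have "0 < x" by simp
    from Maclaurin[OF this, of 2 D f] D0 D obtain s
      where s: "0 < s" "s < x" "f x = (\<Sum>m<2. D m 0 / fact m * x ^ m) + D 2 s / fact 2 * x\<^sup>2"
      by auto
    have "f x = D 2 s / 2 * x\<^sup>2"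
      using s(3) D0 D1 assms(2) by (simp add: eval_nat_numeral)
    also have "\<dots> \<le> max 0 (K / 2) * x\<^sup>2"
      using K[of s] s that by (intro mult_right_mono) auto
    finally show ?thesis .
  qed
  then show thesis
    by (intro that[of "max 0 (K / 2)"]) auto
qed

lemma nn_integral_nonneg_deriv_finite:
  fixes F f :: "real \<Rightarrow> real"
  assumes "x0 < t1"
    and deriv: "\<And>x. x0 < x \<Longrightarrow> x \<le> t1 \<Longrightarrow> (F has_real_derivative f x) (at x)"
    and cont: "\<And>x. x0 < x \<Longrightarrow> x \<le> t1 \<Longrightarrow> isCont f x"
    and nonneg: "\<And>x. x0 < x \<Longrightarrow> x \<le> t1 \<Longrightarrow> 0 \<le> f x"
    and bounded: "\<And>x. x0 < x \<Longrightarrow> x \<le> t1 \<Longrightarrow> L \<le> F x"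
  shows "(\<integral>\<^sup>+ x\<in>{x0<..<t1}. ennreal (f x) \<partial>lborel) < \<infinity>"
proof -
  have mono: "F s \<le> F s'" if "x0 < s" "s \<le> s'" "s' \<le> t1" for s s'
    by (rule DERIV_nonneg_imp_le[OF \<open>s \<le> s'\<close>, where f' = f]) (use that deriv nonneg in auto)
  have "(F \<longlongrightarrow> Inf (F ` ({x0<..} \<inter> {x0<..<t1}))) (at x0 within ({x0<..} \<inter> {x0<..<t1}))"
    by (rule Lim_right_bound[where K = L]) (use mono bounded in auto)
  moreover have "at x0 within ({x0<..} \<inter> {x0<..<t1}) = at_right x0"
    by (rule at_within_nhd[where S = "{..<t1}"]) (use \<open>x0 < t1\<close> in auto)
  ultimately have lim_left_end: "(F \<longlongrightarrow> Inf (F ` ({x0<..} \<inter> {x0<..<t1}))) (at_right x0)"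
    by simp
  have "(F \<longlongrightarrow> F t1) (at_left t1)"
    using DERIV_isCont[OF deriv[of t1]] \<open>x0 < t1\<close>
    by (auto simp: isCont_def intro: tendsto_mono[OF at_within_le_at])
  then have "set_integrable lborel (einterval x0 t1) f"
    using \<open>x0 < t1\<close> lim_left_end deriv cont nonneg
    by (intro interval_integral_FTC_nonneg(1)[where F = F]) (auto simp: ereal_tendsto_simps1)
  then have "(\<integral>\<^sup>+ x. ennreal (indicator {x0<..<t1} x *\<^sub>R f x) \<partial>lborel) \<noteq> \<infinity>"
    by (auto simp: set_integrable_def)
  moreover have "(\<integral>\<^sup>+ x\<in>{x0<..<t1}. ennreal (f x) \<partial>lborel)
      = (\<integral>\<^sup>+ x. ennreal (indicator {x0<..<t1} x *\<^sub>R f x) \<partial>lborel)"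
    by (auto intro!: nn_integral_cong simp: indicator_def)
  ultimately show ?thesis
    by (simp add: less_top)
qed

lemma abc_integral_finite_at_finite_end:
  fixes \<epsilon> a b c :: "real \<Rightarrow> real"
  assumes sol: "is_sol \<epsilon> a b c (eint (ereal x0) \<eta>)" and t0: "t0 \<in> eint (ereal x0) \<eta>"
  shows "(\<integral>\<^sup>+ t\<in>{x0<..t0}. ennreal (a t * b t * c t) \<partial>lborel) < \<infinity>"
proof -
  obtain t1 where "t0 < t1" "ereal t1 < \<eta>"
    using ereal_dense2[of t0 \<eta>] t0 by (auto simp: eint_def)
  have "x0 < t0"
    using t0 by (simp add: eint_def)
  have "x \<in> eint (ereal x0) \<eta>" if "x0 < x" "x \<le> t1" for x
    using that \<open>ereal t1 < \<eta>\<close> by (auto simp: eint_def) (metis ereal_less_eq(3) le_less_trans)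
  then have pos: "0 < a x" "0 < b x" "0 < c x"
    and a_deriv: "(a has_real_derivative a x * (- (a x)\<^sup>2 + (c x)\<^sup>2) / 2) (at x)"
    and b_deriv: "(b has_real_derivative b x * ((a x)\<^sup>2 + (c x)\<^sup>2) / 2) (at x)"
    and c_deriv: "(c has_real_derivative c x * ((a x)\<^sup>2 - (c x)\<^sup>2 + 2 * (a x * b x)\<^sup>2
          + 2 * \<epsilon> (b x) * (a x)\<^sup>2) / 2) (at x)"
    if "x0 < x" "x \<le> t1" for x
    using sol that unfolding is_sol_def by blast+
  define f where "f x = b x * ((a x)\<^sup>2 + (c x)\<^sup>2) / 2" for x
  have "(\<integral>\<^sup>+ x\<in>{x0<..<t1}. ennreal (f x) \<partial>lborel) < \<infinity>"
  proof (rule nn_integral_nonneg_deriv_finite[where F = b and L = 0])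
    show "x0 < t1"
      using \<open>x0 < t0\<close> \<open>t0 < t1\<close> by simp
    fix x assume x: "x0 < x" "x \<le> t1"
    show "(b has_real_derivative f x) (at x)"
      using b_deriv[OF x] by (simp add: f_def)
    show "isCont f x"
      unfolding f_def using DERIV_isCont[OF a_deriv[OF x]] DERIV_isCont[OF b_deriv[OF x]]
        DERIV_isCont[OF c_deriv[OF x]]
      by (intro continuous_intros) simp_all
    show "0 \<le> f x" "0 \<le> b x"
      using pos[OF x] by (simp_all add: f_def)
  qed
  moreover have "(\<integral>\<^sup>+ t\<in>{x0<..t0}. ennreal (a t * b t * c t) \<partial>lborel)
      \<le> (\<integral>\<^sup>+ x\<in>{x0<..<t1}. ennreal (f x) \<partial>lborel)"
  proof (intro nn_integral_mono)
    fix x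
    have "a x * b x * c x \<le> f x" if "x0 < x" "x \<le> t1"
    proof -
      have "b x * (2 * (a x * c x)) \<le> b x * ((a x)\<^sup>2 + (c x)\<^sup>2)"
        using sum_squares_bound[of "a x" "c x"] pos[OF that] by (intro mult_left_mono) auto
      then show ?thesis
        by (simp add: f_def algebra_simps)
    qed
    then show "ennreal (a x * b x * c x) * indicator {x0<..t0} x
        \<le> ennreal (f x) * indicator {x0<..<t1} x"
      using \<open>t0 < t1\<close> by (auto simp: indicator_def intro: ennreal_leI)
  qed
  ultimately show ?thesis
    by (simp add: order_le_less_trans)
qed

locale left_unbounded_solution =
  fixes \<epsilon> a b c :: "real \<Rightarrow> real" and \<eta> :: ereal
  assumes admissible: "admissible_eps \<epsilon>"
    and solution: "is_sol \<epsilon> a b c {t. ereal t < \<eta>}"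
begin

definition cbound :: "real \<Rightarrow> real" where
  "cbound t = (a t)\<^sup>2 * (1 + 2 * ((b t)\<^sup>2 + \<epsilon> (b t)))"

definition cbound' :: "real \<Rightarrow> real" where
  "cbound' t = (a t)\<^sup>2 * ((c t)\<^sup>2 - (a t)\<^sup>2) * (1 + 2 * ((b t)\<^sup>2 + \<epsilon> (b t)))
    + (a t)\<^sup>2 * ((a t)\<^sup>2 + (c t)\<^sup>2) * b t * (2 * b t + deriv \<epsilon> (b t))"

lemma in_domain_below: "t \<le> s \<Longrightarrow> ereal s < \<eta> \<Longrightarrow> ereal t < \<eta>"
  by (metis ereal_less_eq(3) le_less_trans)

lemma eps_nonneg: "0 \<le> x \<Longrightarrow> 0 \<le> \<epsilon> x"
  using admissible by (simp add: admissible_eps_def)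

lemma eps_has_deriv: "(\<epsilon> has_real_derivative deriv \<epsilon> x) (at x)"
  using admissible by (simp add: admissible_eps_def smooth_real_has_deriv)

lemma deriv_eps_gt: "0 < x \<Longrightarrow> - 2 * x < deriv \<epsilon> x"
  using admissible by (simp add: admissible_eps_def)

context
  fixes t :: real
  assumes t: "ereal t < \<eta>"
begin

lemma positive: "0 < a t" "0 < b t" "0 < c t"
  using solution t by (simp_all add: is_sol_def)

lemma a_sq_deriv: "((\<lambda>t. (a t)\<^sup>2) has_real_derivative (a t)\<^sup>2 * ((c t)\<^sup>2 - (a t)\<^sup>2)) (at t)"
proof -
  have "(a has_real_derivative a t * (- (a t)\<^sup>2 + (c t)\<^sup>2) / 2) (at t)"
    using solution t by (simp add: is_sol_def)
  then show ?thesis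
    by (rule derivative_eq_intros refl)+ (simp add: power2_eq_square field_simps)
qed

lemma b_sq_deriv: "((\<lambda>t. (b t)\<^sup>2) has_real_derivative (b t)\<^sup>2 * ((a t)\<^sup>2 + (c t)\<^sup>2)) (at t)"
proof -
  have "(b has_real_derivative b t * ((a t)\<^sup>2 + (c t)\<^sup>2) / 2) (at t)"
    using solution t by (simp add: is_sol_def)
  then show ?thesis
    by (rule derivative_eq_intros refl)+ (simp add: power2_eq_square field_simps)
qed

lemma c_sq_deriv: "((\<lambda>t. (c t)\<^sup>2) has_real_derivative (c t)\<^sup>2 * (cbound t - (c t)\<^sup>2)) (at t)"
proof -
  have "(c has_real_derivative c t * ((a t)\<^sup>2 - (c t)\<^sup>2 + 2 * (a t * b t)\<^sup>2
      + 2 * \<epsilon> (b t) * (a t)\<^sup>2) / 2) (at t)"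
    using solution t by (simp add: is_sol_def)
  then show ?thesis
    by (rule derivative_eq_intros refl)+ (simp add: cbound_def power2_eq_square field_simps)
qed

lemma cbound_deriv: "(cbound has_real_derivative cbound' t) (at t)"
proof -
  have "(b has_real_derivative b t * ((a t)\<^sup>2 + (c t)\<^sup>2) / 2) (at t)"
    using solution t by (simp add: is_sol_def)
  then have "((\<lambda>t. \<epsilon> (b t)) has_real_derivative deriv \<epsilon> (b t) * (b t * ((a t)\<^sup>2 + (c t)\<^sup>2) / 2)) (at t)"
    by (rule DERIV_chain2[OF eps_has_deriv])
  from DERIV_add[OF DERIV_const DERIV_cmult[OF DERIV_add[OF b_sq_deriv this], where c = 2]]
  have "((\<lambda>t. 1 + 2 * ((b t)\<^sup>2 + \<epsilon> (b t))) has_real_derivative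
      0 + 2 * ((b t)\<^sup>2 * ((a t)\<^sup>2 + (c t)\<^sup>2) + deriv \<epsilon> (b t) * (b t * ((a t)\<^sup>2 + (c t)\<^sup>2) / 2))) (at t)"
    by (rule DERIV_cong) simp
  from DERIV_mult[OF a_sq_deriv this] show ?thesis
    unfolding cbound_def[abs_def]
    by (rule DERIV_cong) (simp add: cbound'_def power2_eq_square field_simps)
qed

lemma a_sq_le_cbound: "(a t)\<^sup>2 \<le> cbound t"
  using eps_nonneg[of "b t"] positive by (simp add: cbound_def)

end

lemma a_sq_le_c_sq:
  assumes t1: "ereal t1 < \<eta>"
  shows "(a t1)\<^sup>2 \<le> (c t1)\<^sup>2"
proof (rule ccontr)
  assume violated: "\<not> ?thesis"
  have dom: "ereal s < \<eta>" if "s \<le> t1" for s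
    using in_domain_below[OF that t1] .
  have gap_neg: "(c s)\<^sup>2 - (a s)\<^sup>2 < 0" if "s \<le> t1" for s
  proof (rule negative_persists_backward[OF that])
    fix x assume "s \<le> x" "x \<le> t1"
    then have x: "ereal x < \<eta>" using dom by simp
    show "((\<lambda>t. (c t)\<^sup>2 - (a t)\<^sup>2) has_real_derivative
        (c x)\<^sup>2 * (cbound x - (c x)\<^sup>2) - (a x)\<^sup>2 * ((c x)\<^sup>2 - (a x)\<^sup>2)) (at x)"
      using c_sq_deriv[OF x] a_sq_deriv[OF x] by (rule DERIV_diff)
    assume "(c x)\<^sup>2 - (a x)\<^sup>2 < 0"
    moreover note a_sq_le_cbound[OF x] positive[OF x]
    ultimately show "0 < (c x)\<^sup>2 * (cbound x - (c x)\<^sup>2) - (a x)\<^sup>2 * ((c x)\<^sup>2 - (a x)\<^sup>2)"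
      by (smt (verit) mult_pos_pos mult_pos_neg zero_less_power)
  qed (use violated in simp)
  show False
  proof (rule logistic_not_positive_on_halfline[where X = "\<lambda>t. (a t)\<^sup>2" and p = "\<lambda>t. (c t)\<^sup>2"])
    fix s assume "s \<le> t1"
    then have s: "ereal s < \<eta>" by (rule dom)
    show "0 < (a s)\<^sup>2" "0 \<le> (c s)\<^sup>2"
      using positive(1)[OF s] by simp_all
    show "((\<lambda>t. (a t)\<^sup>2) has_real_derivative (a s)\<^sup>2 * ((c s)\<^sup>2 - (a s)\<^sup>2)) (at s)"
      by (rule a_sq_deriv[OF s])
    show "(a t1)\<^sup>2 \<le> (a s)\<^sup>2"
      by (rule DERIV_nonpos_imp_ge[OF \<open>s \<le> t1\<close> a_sq_deriv])
        (use dom gap_neg in \<open>meson less_imp_le mult_nonneg_nonpos zero_le_power2 order_trans\<close>)+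
    show "(c s)\<^sup>2 \<le> (c t1)\<^sup>2"
      by (rule DERIV_nonneg_imp_le[OF \<open>s \<le> t1\<close> c_sq_deriv])
        (use dom gap_neg a_sq_le_cbound in \<open>force intro: mult_nonneg_nonneg\<close>)+
  qed (use violated in simp)
qed

lemma cbound'_nonneg:
  assumes x: "ereal x < \<eta>"
  shows "0 \<le> cbound' x"
proof -
  have "0 \<le> (a x)\<^sup>2 * ((c x)\<^sup>2 - (a x)\<^sup>2) * (1 + 2 * ((b x)\<^sup>2 + \<epsilon> (b x)))"
    using a_sq_le_c_sq[OF x] eps_nonneg[of "b x"] positive[OF x] by simp
  moreover have "0 \<le> (a x)\<^sup>2 * ((a x)\<^sup>2 + (c x)\<^sup>2) * b x * (2 * b x + deriv \<epsilon> (b x))"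
    using deriv_eps_gt[of "b x"] positive[OF x] by simp
  ultimately show ?thesis
    by (simp add: cbound'_def)
qed

lemma cbound_mono:
  assumes "t \<le> s" "ereal s < \<eta>"
  shows "cbound t \<le> cbound s"
  using assms in_domain_below
  by (intro DERIV_nonneg_imp_le[OF \<open>t \<le> s\<close> cbound_deriv cbound'_nonneg]) blast+

lemma c_sq_le_cbound:
  assumes t1: "ereal t1 < \<eta>"
  shows "(c t1)\<^sup>2 \<le> cbound t1"
proof (rule ccontr)
  assume violated: "\<not> ?thesis"
  have dom: "ereal s < \<eta>" if "s \<le> t1" for s
    using in_domain_below[OF that t1] .
  have excess_neg: "cbound s - (c s)\<^sup>2 < 0" if "s \<le> t1" for s
  proof (rule negative_persists_backward[OF that])
    fix x assume "s \<le> x" "x \<le> t1"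
    then have x: "ereal x < \<eta>" using dom by simp
    show "((\<lambda>t. cbound t - (c t)\<^sup>2) has_real_derivative
        cbound' x - (c x)\<^sup>2 * (cbound x - (c x)\<^sup>2)) (at x)"
      using cbound_deriv[OF x] c_sq_deriv[OF x] by (rule DERIV_diff)
    assume "cbound x - (c x)\<^sup>2 < 0"
    then show "0 < cbound' x - (c x)\<^sup>2 * (cbound x - (c x)\<^sup>2)"
      using cbound'_nonneg[OF x] positive[OF x] by (smt (verit) mult_pos_neg zero_less_power)
  qed (use violated in simp)
  show False
  proof (rule logistic_not_positive_on_halfline[where X = "\<lambda>t. (c t)\<^sup>2" and p = cbound])
    fix s assume "s \<le> t1"
    then have s: "ereal s < \<eta>" by (rule dom)
    show "0 < (c s)\<^sup>2"
      using positive(3)[OF s] by simp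
    show "0 \<le> cbound s"
      using a_sq_le_cbound[OF s] by (rule order_trans[OF zero_le_power2])
    show "cbound s \<le> cbound t1"
      using \<open>s \<le> t1\<close> t1 by (rule cbound_mono)
    show "((\<lambda>t. (c t)\<^sup>2) has_real_derivative (c s)\<^sup>2 * (cbound s - (c s)\<^sup>2)) (at s)"
      by (rule c_sq_deriv[OF s])
    show "(c t1)\<^sup>2 \<le> (c s)\<^sup>2"
      by (rule DERIV_nonpos_imp_ge[OF \<open>s \<le> t1\<close> c_sq_deriv])
        (use dom excess_neg in \<open>meson less_imp_le mult_nonneg_nonpos zero_le_power2 order_trans\<close>)+
  qed (use violated in simp)
qed

lemma a_mono:
  assumes "t \<le> s" "ereal s < \<eta>"
  shows "a t \<le> a s"
proof -
  have "(a t)\<^sup>2 \<le> (a s)\<^sup>2"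
    using assms in_domain_below a_sq_le_c_sq positive(1)
    by (intro DERIV_nonneg_imp_le[OF \<open>t \<le> s\<close> a_sq_deriv]) (blast, simp)
  then show ?thesis
    using positive(1)[OF assms(2)] by (simp add: power2_le_iff_abs_le)
qed

lemma b_mono:
  assumes "t \<le> s" "ereal s < \<eta>"
  shows "b t \<le> b s"
proof -
  have "(b t)\<^sup>2 \<le> (b s)\<^sup>2"
    using assms in_domain_below
    by (intro DERIV_nonneg_imp_le[OF \<open>t \<le> s\<close> b_sq_deriv]) (blast, simp)
  then show ?thesis
    using positive(2)[OF assms(2)] by (simp add: power2_le_iff_abs_le)
qed

lemma a_sq_lower_bound:
  assumes t0: "ereal t0 < \<eta>"
  obtains \<beta> where "0 < \<beta>" "\<And>t. t \<le> t0 \<Longrightarrow> \<beta> \<le> (a t)\<^sup>2"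
proof -
  obtain M where "0 \<le> M" and M: "\<And>x. 0 \<le> x \<Longrightarrow> x \<le> b t0 \<Longrightarrow> \<epsilon> x \<le> M * x\<^sup>2"
    using admissible smooth_flat_imp_quadratic_bound unfolding admissible_eps_def by metis
  define G where "G t = (a t)\<^sup>2 * exp (- (M + 1) * (b t)\<^sup>2)" for t
  have "G t0 \<le> G t" if "t \<le> t0" for t
  proof (rule DERIV_nonpos_imp_ge[OF that])
    fix x assume "t \<le> x" "x \<le> t0"
    then have x: "ereal x < \<eta>"
      using in_domain_below t0 by blast
    from DERIV_mult[OF a_sq_deriv[OF x]
        DERIV_chain2[OF DERIV_exp DERIV_cmult[OF b_sq_deriv[OF x], where c = "- (M + 1)"]]]
    show "(G has_real_derivative
        G x * ((c x)\<^sup>2 - (a x)\<^sup>2 - (M + 1) * ((b x)\<^sup>2 * ((a x)\<^sup>2 + (c x)\<^sup>2)))) (at x)"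
      unfolding G_def[abs_def] by (rule DERIV_cong) (simp add: algebra_simps)
    have "b x \<le> b t0"
      using \<open>x \<le> t0\<close> t0 by (rule b_mono)
    have "(c x)\<^sup>2 - (a x)\<^sup>2 \<le> 2 * (a x)\<^sup>2 * ((b x)\<^sup>2 + \<epsilon> (b x))"
      using c_sq_le_cbound[OF x] by (simp add: cbound_def algebra_simps)
    also have "\<dots> \<le> 2 * (a x)\<^sup>2 * ((M + 1) * (b x)\<^sup>2)"
      using M[of "b x"] positive(2)[OF x] \<open>b x \<le> b t0\<close>
      by (intro mult_left_mono) (auto simp: algebra_simps)
    also have "\<dots> \<le> (M + 1) * ((b x)\<^sup>2 * ((a x)\<^sup>2 + (c x)\<^sup>2))"
      using mult_right_mono[OF a_sq_le_c_sq[OF x], of "(M + 1) * (b x)\<^sup>2"] \<open>0 \<le> M\<close>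
      by (simp add: algebra_simps)
    finally show "G x * ((c x)\<^sup>2 - (a x)\<^sup>2 - (M + 1) * ((b x)\<^sup>2 * ((a x)\<^sup>2 + (c x)\<^sup>2))) \<le> 0"
      by (intro mult_nonneg_nonpos) (simp_all add: G_def)
  qed
  moreover have "G t \<le> (a t)\<^sup>2" for t
  proof -
    have "- (M + 1) * (b t)\<^sup>2 \<le> 0"
      using \<open>0 \<le> M\<close> by (simp add: mult_nonpos_nonneg)
    then show ?thesis
      by (simp add: G_def mult_left_le)
  qed
  moreover have "0 < G t0"
    using positive(1)[OF t0] by (simp add: G_def)
  ultimately show thesis
    by (intro that[of "G t0"]) (auto intro: order_trans)
qed

lemma b_tendsto_zero:
  assumes t0: "ereal t0 < \<eta>"
  shows "(b \<longlongrightarrow> 0) at_bot"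
proof -
  obtain \<beta> where "0 < \<beta>" and \<beta>: "\<And>t. t \<le> t0 \<Longrightarrow> \<beta> \<le> (a t)\<^sup>2"
    using a_sq_lower_bound t0 by blast
  define H where "H t = (b t)\<^sup>2 * exp (- \<beta> * t)" for t
  have H_le: "H t \<le> H t0" if "t \<le> t0" for t
  proof (rule DERIV_nonneg_imp_le[OF that])
    fix x assume "t \<le> x" "x \<le> t0"
    then have x: "ereal x < \<eta>"
      using in_domain_below t0 by blast
    from DERIV_mult[OF b_sq_deriv[OF x] DERIV_chain2[OF DERIV_exp DERIV_cmult[OF DERIV_ident]]]
    show "(H has_real_derivative H x * ((a x)\<^sup>2 + (c x)\<^sup>2 - \<beta>)) (at x)"
      unfolding H_def[abs_def] by (rule DERIV_cong) (simp add: algebra_simps)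
    have "0 \<le> (a x)\<^sup>2 + (c x)\<^sup>2 - \<beta>"
      using \<beta>[OF \<open>x \<le> t0\<close>] zero_le_power2[of "c x"] by linarith
    then show "0 \<le> H x * ((a x)\<^sup>2 + (c x)\<^sup>2 - \<beta>)"
      by (simp add: H_def)
  qed
  have bound: "(b t)\<^sup>2 \<le> H t0 * exp (\<beta> * t)" if "t \<le> t0" for t
  proof -
    have "(b t)\<^sup>2 = H t * exp (\<beta> * t)"
      by (simp add: H_def mult_exp_exp)
    also have "\<dots> \<le> H t0 * exp (\<beta> * t)"
      using H_le[OF that] by simp
    finally show ?thesis .
  qed
  have lim: "((\<lambda>t. H t0 * exp (\<beta> * t)) \<longlongrightarrow> 0) at_bot"
    using filterlim_compose[OF exp_at_bot
        filterlim_tendsto_pos_mult_at_bot[OF tendsto_const \<open>0 < \<beta>\<close> filterlim_ident]]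
    by (rule tendsto_mult_right_zero)
  have ev: "eventually (\<lambda>t. (b t)\<^sup>2 \<le> H t0 * exp (\<beta> * t)) at_bot"
    using bound unfolding eventually_at_bot_linorder by blast
  have "((\<lambda>t. (b t)\<^sup>2) \<longlongrightarrow> 0) at_bot"
    by (rule tendsto_sandwich[OF _ ev tendsto_const lim]) simp
  then show ?thesis
    by simp
qed

lemma a_tendsto:
  assumes t0: "ereal t0 < \<eta>"
  obtains q where "0 < q" "(a \<longlongrightarrow> q) at_bot"
proof -
  obtain \<beta> where "0 < \<beta>" and \<beta>: "\<And>t. t \<le> t0 \<Longrightarrow> \<beta> \<le> (a t)\<^sup>2"
    using a_sq_lower_bound t0 by blast
  have lower: "sqrt \<beta> \<le> a t" if "t \<le> t0" for t
    using \<beta>[OF that] positive(1)[OF in_domain_below[OF that t0]] by (simp add: real_le_lsqrt)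
  define q where "q = Inf (a ` {..t0})"
  have q_le: "q \<le> a t" if "t \<le> t0" for t
    unfolding q_def using lower that by (intro cInf_lower bdd_belowI2) auto
  have "sqrt \<beta> \<le> q"
    unfolding q_def using lower by (intro cInf_greatest) auto
  have "(a \<longlongrightarrow> q) at_bot"
  proof (rule decreasing_tendsto)
    show "eventually (\<lambda>t. q \<le> a t) at_bot"
      using q_le by (auto simp: eventually_at_bot_linorder)
    fix y assume "q < y"
    then obtain s where "s \<le> t0" "a s < y"
      using cInf_lessD[of "a ` {..t0}" y] by (auto simp: q_def)
    have "a t \<le> a s" if "t \<le> s" for t
      using that in_domain_below[OF \<open>s \<le> t0\<close> t0] by (rule a_mono)
    with \<open>a s < y\<close> show "eventually (\<lambda>t. a t < y) at_bot"
      by (auto simp: eventually_at_bot_linorder intro: le_less_trans)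
  qed
  moreover have "0 < q"
    using \<open>0 < \<beta>\<close> \<open>sqrt \<beta> \<le> q\<close> by (metis less_le_trans real_sqrt_gt_zero)
  ultimately show thesis
    using that by blast
qed

lemma c_tendsto:
  assumes t0: "ereal t0 < \<eta>" and a: "(a \<longlongrightarrow> q) at_bot"
  shows "(c \<longlongrightarrow> q) at_bot"
proof (rule tendsto_sandwich[OF _ _ a])
  have ev: "eventually (\<lambda>t. ereal t < \<eta>) at_bot"
    using in_domain_below t0 by (auto simp: eventually_at_bot_linorder)
  then show "eventually (\<lambda>t. a t \<le> c t) at_bot"
    by (rule eventually_mono)
      (use a_sq_le_c_sq positive in \<open>meson power2_le_imp_le less_imp_le\<close>)
  define r where "r t = sqrt (1 + 2 * ((b t)\<^sup>2 + \<epsilon> (b t)))" for t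
  from ev show "eventually (\<lambda>t. c t \<le> a t * r t) at_bot"
  proof (rule eventually_mono)
    fix t assume t: "ereal t < \<eta>"
    have "c t \<le> sqrt (cbound t)"
      using c_sq_le_cbound[OF t] by (rule real_le_rsqrt)
    also have "\<dots> = a t * r t"
      using positive(1)[OF t] by (simp add: cbound_def r_def real_sqrt_mult)
    finally show "c t \<le> a t * r t" .
  qed
  have "isCont \<epsilon> 0" "\<epsilon> 0 = 0"
    using DERIV_isCont[OF eps_has_deriv] admissible by (auto simp: admissible_eps_def)
  then have "((\<lambda>t. \<epsilon> (b t)) \<longlongrightarrow> 0) at_bot"
    using isCont_tendsto_compose[OF _ b_tendsto_zero[OF t0]] by metis
  then have "(r \<longlongrightarrow> 1) at_bot"
    unfolding r_def using b_tendsto_zero[OF t0]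
    by (auto intro!: tendsto_eq_intros)
  then show "((\<lambda>t. a t * r t) \<longlongrightarrow> q) at_bot"
    using tendsto_mult[OF a] by fastforce
qed

end

theorem proposition7p2:
  fixes \<epsilon> a b c :: "real \<Rightarrow> real" and \<xi> \<eta> :: ereal and t0 :: real
  assumes "admissible_eps \<epsilon>"
    and "maximal_sol \<epsilon> a b c \<xi> \<eta>"
    and "t0 \<in> eint \<xi> \<eta>"
  defines "P1 \<equiv> \<xi> \<noteq> -\<infinity> \<and>
      (\<integral>\<^sup>+ t \<in> {real_of_ereal \<xi><..t0}. ennreal (a t * b t * c t) \<partial>lborel) < \<infinity>"
    and "P2 \<equiv> \<xi> = -\<infinity> \<and>
      (\<forall>t\<in>eint \<xi> \<eta>. 0 \<le> (c t)\<^sup>2 - (a t)\<^sup>2 \<and>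
          (c t)\<^sup>2 - (a t)\<^sup>2 \<le> 2 * (a t)\<^sup>2 * ((b t)\<^sup>2 + \<epsilon> (b t))) \<and>
      (\<exists>q>0. (a \<longlongrightarrow> q) at_bot \<and> (b \<longlongrightarrow> 0) at_bot \<and> (c \<longlongrightarrow> q) at_bot)"
  shows "(P1 \<or> P2) \<and> \<not> (P1 \<and> P2)"
proof -
  from assms(2) have "\<xi> < \<eta>" and sol: "is_sol \<epsilon> a b c (eint \<xi> \<eta>)"
    by (auto simp: maximal_sol_def)
  show ?thesis
  proof (cases \<xi>)
    case (real x0)
    with sol assms(3) have P1
      using abc_integral_finite_at_finite_end[of \<epsilon> a b c x0 \<eta> t0] by (simp add: P1_def)
    with real show ?thesis
      by (simp add: P2_def)
  next
    case PInf
    with \<open>\<xi> < \<eta>\<close> show ?thesis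
      by simp
  next
    case MInf
    then have dom: "eint \<xi> \<eta> = {t. ereal t < \<eta>}"
      by (auto simp: eint_def)
    interpret left_unbounded_solution \<epsilon> a b c \<eta>
      using assms(1) sol dom by unfold_locales simp_all
    have t0: "ereal t0 < \<eta>"
      using assms(3) dom by simp
    obtain q where "0 < q" "(a \<longlongrightarrow> q) at_bot"
      using a_tendsto[OF t0] .
    then have P2
      using MInf dom a_sq_le_c_sq c_sq_le_cbound b_tendsto_zero[OF t0] c_tendsto[OF t0]
      unfolding P2_def cbound_def by (auto simp: algebra_simps)
    with MInf show ?thesis
      by (simp add: P1_def)
  qed
qed

end
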